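(* Let $V$ be a finite set, $E\subseteq V\times V$ a reflexive symmetric relation, $\mathcal{S}$ the collection of connected subsets of $V$ (as defined in the context), $\mu$ an additive measure on $2^V$ with $\mu(S)=0$ only for $S=\emptyset$, and $S^*\in\mathcal{S}\cup\{\emptyset\}$. Let $P_0$ be a valid partition of $V$. Then there exists a valid partition coarser than $P_0$ under which the percentile of $S^*$ is strictly less than (respectively, strictly greater than) the percentile of $S^*$ under $P_0$ if and only if there exist $l$ large, $m$ medium and $s$ small blocks of $P_0$ (blocks other than $S^*$), with $l+m+s\ge 2$, whose union lies in $\mathcal{S}$ and such that $$\frac{l+0.5m-1}{l+m+s-1}$$ is strictly greater than (respectively, strictly less than) the percentile of $S^*$ under $P_0$.
   Context: $G=(V,E)$ is viewed as a simple undirected graph. $\mathcal{S}$ is the set of nonempty $S\subseteq V$ that are connected: for every partition $S=A\sqcup B$ with $A,B\neq\emptyset$ there exist $a\in A$, $b\in B$ with $(a,b)\in E$. $\mu:2^V\to[0,\infty)$ satisfies $\mu(S)=\sum_{s\in S}\mu(\{s\})$. A valid partition is a partition $(S_1,\dots,S_c,S^* )$ of $V$ with $S_1,\dots,S_c\in\mathcal{S}$. The percentile of $S^*$ under it is $\frac{|\{i:\mu(S_i)>\mu(S^* )\}|+0.5|\{i:\mu(S_i)=\mu(S^* )\}|+0.5}{c+1}$. A set $S\in\mathcal{S}\setminus\{S^*\}$ is large if $\mu(S)>\mu(S^* )$, medium if $\mu(S)=\mu(S^* )$, small if $\mu(S)<\mu(S^* )$. A valid partition is coarser than $P_0$ if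 it still contains $S^*$ as a block and each of its other blocks is a union of blocks of $P_0$. *)

theory Defs
  imports Main "HOL-Library.Disjoint_Sets" Complex_Main
begin

definition conn_set :: "('a \<times> 'a) set \<Rightarrow> 'a set \<Rightarrow> 'a set \<Rightarrow> bool" where
  "conn_set E V S \<longleftrightarrow> S \<noteq> {} \<and> S \<subseteq> V \<and>
     (\<forall>A B. A \<union> B = S \<and> A \<inter> B = {} \<and> A \<noteq> {} \<and> B \<noteq> {} \<longrightarrow>
        (\<exists>a\<in>A. \<exists>b\<in>B. (a, b) \<in> E))"

text \<open>A valid partition (S_1,...,S_c,S*) of V is represented by the set P = {S_1,...,S_c}
of its blocks other than S*.\<close>
definition valid_partition :: "('a \<times> 'a) set \<Rightarrow> 'a set \<Rightarrow> 'a set \<Rightarrow> 'a set set \<Rightarrow> bool" where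
  "valid_partition E V Sstar P \<longleftrightarrow>
     (\<forall>B\<in>P. conn_set E V B) \<and> disjoint P \<and> \<Union>P \<inter> Sstar = {} \<and> \<Union>P \<union> Sstar = V"

definition percentile :: "('a set \<Rightarrow> real) \<Rightarrow> 'a set \<Rightarrow> 'a set set \<Rightarrow> real" where
  "percentile \<mu> Sstar P =
     (real (card {B\<in>P. \<mu> B > \<mu> Sstar}) + 0.5 * real (card {B\<in>P. \<mu> B = \<mu> Sstar}) + 0.5)
       / (real (card P) + 1)"

definition coarser :: "('a \<times> 'a) set \<Rightarrow> 'a set \<Rightarrow> 'a set \<Rightarrow> 'a set set \<Rightarrow> 'a set set \<Rightarrow> bool" where
  "coarser E V Sstar Q P0 \<longleftrightarrow> valid_partition E V Sstar Q \<and> (\<forall>B\<in>Q. \<exists>T\<subseteq>P0. B = \<Union>T)"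

end

theory Submission
  imports Defs
begin

text \<open>Score a block 1, 1/2 or 0 according as it is large, medium or small, so that the
percentile of \<open>S*\<close> under \<open>P\<close> is \<open>(score P + 1/2) / (card P + 1)\<close>. In a coarsening \<open>Q\<close> of \<open>P\<^sub>0\<close>
every block \<open>B\<close> of \<open>Q\<close> replaces the group \<open>T\<close> of blocks of \<open>P\<^sub>0\<close> inside it, lowering the score by
\<open>score T - weight B\<close> and the number of blocks by \<open>card T - 1\<close>. So the percentile drops below
\<open>p = percentile P\<^sub>0\<close> iff the total score loss exceeds \<open>p\<close> times the total block loss; this holds iff
it holds for a single group, and merging that group alone already lowers the percentile (likewise
for raising it). A group of at least two blocks with positive score contains a block of measure at
least \<open>\<mu> S*\<close> and another of positive measure, so its union is large; this turns the per-group
condition into the ratio condition of the statement.\<close>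

definition rank_weight :: "real \<Rightarrow> real \<Rightarrow> real" where
  "rank_weight a v = (if a < v then 1 else if v = a then 1/2 else 0)"

definition rank_score :: "('b \<Rightarrow> real) \<Rightarrow> real \<Rightarrow> 'b set \<Rightarrow> real" where
  "rank_score \<mu> a T = (\<Sum>B\<in>T. rank_weight a (\<mu> B))"

lemma rank_weight_bounds: "0 \<le> rank_weight a v" "rank_weight a v \<le> 1"
  by (auto simp: rank_weight_def)

lemma rank_score_nonneg: "0 \<le> rank_score \<mu> a T"
  by (simp add: rank_score_def sum_nonneg rank_weight_bounds)

lemma rank_score_singleton [simp]: "rank_score \<mu> a {B} = rank_weight a (\<mu> B)"
  by (simp add: rank_score_def)

lemma rank_score_eq_card:
  assumes "finite T"
  shows "rank_score \<mu> a T = real (card {B\<in>T. \<mu> B > a}) + 0.5 * real (card {B\<in>T. \<mu> B = a})"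
proof -
  have "rank_score \<mu> a T =
      (\<Sum>B\<in>T. if a < \<mu> B then 1 else 0) + 1/2 * (\<Sum>B\<in>T. if \<mu> B = a then 1 else 0)"
    unfolding rank_score_def sum_distrib_left sum.distrib[symmetric]
    by (rule sum.cong) (auto simp: rank_weight_def)
  also have "\<dots> = real (card {B\<in>T. \<mu> B > a}) + 0.5 * real (card {B\<in>T. \<mu> B = a})"
    using assms by (simp add: sum.inter_filter[symmetric])
  finally show ?thesis .
qed

lemma percentile_eq_rank_score:
  "finite P \<Longrightarrow> percentile \<mu> S P = (rank_score \<mu> (\<mu> S) P + 1/2) / (real (card P) + 1)"
  by (simp add: percentile_def rank_score_eq_card)

lemma percentile_pos: "finite P \<Longrightarrow> 0 < percentile \<mu> S P"
  by (simp add: percentile_eq_rank_score add_nonneg_pos rank_score_nonneg)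

lemma percentile_less_percentile_iff:
  fixes \<mu> :: "'a set \<Rightarrow> real" and S :: "'a set"
  assumes "finite P" "finite Q"
  defines "p \<equiv> percentile \<mu> S P"
  shows "percentile \<mu> S Q < p \<longleftrightarrow>
           p * (real (card P) - real (card Q)) < rank_score \<mu> (\<mu> S) P - rank_score \<mu> (\<mu> S) Q"
      (is ?below)
    and "p < percentile \<mu> S Q \<longleftrightarrow>
           rank_score \<mu> (\<mu> S) P - rank_score \<mu> (\<mu> S) Q < p * (real (card P) - real (card Q))"
      (is ?above)
proof -
  have P: "rank_score \<mu> (\<mu> S) P + 1/2 = p * (real (card P) + 1)"
    using assms by (simp add: percentile_eq_rank_score)
  have Q: "percentile \<mu> S Q = (rank_score \<mu> (\<mu> S) Q + 1/2) / (real (card Q) + 1)"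
    using assms by (simp add: percentile_eq_rank_score)
  have "percentile \<mu> S Q < p \<longleftrightarrow> rank_score \<mu> (\<mu> S) Q + 1/2 < p * (real (card Q) + 1)"
    and "p < percentile \<mu> S Q \<longleftrightarrow> p * (real (card Q) + 1) < rank_score \<mu> (\<mu> S) Q + 1/2"
    unfolding Q by (simp_all add: pos_divide_less_eq pos_less_divide_eq)
  moreover have "p * (real (card P) - real (card Q)) =
      rank_score \<mu> (\<mu> S) P + 1/2 - p * (real (card Q) + 1)"
    using P by (simp add: algebra_simps)
  ultimately show ?below ?above
    by argo+
qed

text \<open>If \<open>W = 0\<close> the merged block need not be large, but then both sides of the first
equivalence are false and both sides of the second are true.\<close>
lemma merge_gain_iff:
  fixes p e W w :: real
  assumes "0 < p" "0 < e" "0 \<le> W" "0 \<le> w" "w \<le> 1" "0 < W \<Longrightarrow> w = 1"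
  shows "p * e < W - w \<longleftrightarrow> p < (W - 1) / e" (is ?gain)
    and "W - w < p * e \<longleftrightarrow> (W - 1) / e < p" (is ?loss)
proof -
  have "?gain \<and> ?loss"
  proof (cases "W = 0")
    case True
    have "0 < p * e" "W - w \<le> 0" "(W - 1) / e < 0"
      using True assms by (simp_all add: divide_neg_pos)
    then show ?thesis using assms(1) by argo
  next
    case False
    then have "w = 1" using assms(3,6) by simp
    then show ?thesis using assms(2) by (simp add: pos_less_divide_eq pos_divide_less_eq mult.commute)
  qed
  then show ?gain ?loss by blast+
qed

lemma sum_less_sumD:
  fixes f g :: "'a \<Rightarrow> 'b::{ordered_comm_monoid_add, linorder}"
  shows "(\<Sum>x\<in>A. f x) < (\<Sum>x\<in>A. g x) \<Longrightarrow> \<exists>x\<in>A. f x < g x"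
  using sum_mono[of A g f] by (meson not_le)

lemma measure_Union_disjoint:
  fixes \<mu> :: "'a set \<Rightarrow> real"
  assumes additive: "\<forall>S. S \<subseteq> V \<longrightarrow> \<mu> S = (\<Sum>s\<in>S. \<mu> {s})"
    and "finite V" "\<Union>T \<subseteq> V" "disjoint T"
  shows "\<mu> (\<Union>T) = (\<Sum>A\<in>T. \<mu> A)"
proof -
  have "T \<subseteq> Pow V" using assms(3) by blast
  then have fin: "finite T" "\<forall>A\<in>T. finite A"
    using assms(2) by (auto intro: finite_subset)
  have "\<mu> (\<Union>T) = (\<Sum>A\<in>T. \<Sum>s\<in>A. \<mu> {s})"
    using additive assms(3,4) fin by (simp add: sum.Union_disjoint disjoint_def)
  also have "\<dots> = (\<Sum>A\<in>T. \<mu> A)"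
    using additive assms(3) by (intro sum.cong refl) (metis Sup_le_iff)
  finally show ?thesis .
qed

lemma measure_Union_greater:
  fixes \<mu> :: "'a set \<Rightarrow> real"
  assumes additive: "\<forall>S. S \<subseteq> V \<longrightarrow> \<mu> S = (\<Sum>s\<in>S. \<mu> {s})"
    and nonneg: "\<forall>S. S \<subseteq> V \<longrightarrow> \<mu> S \<ge> 0"
    and zero: "\<forall>S. S \<subseteq> V \<longrightarrow> \<mu> S = 0 \<longrightarrow> S = {}"
    and "finite V" "\<Union>T \<subseteq> V" "disjoint T" "{} \<notin> T" "2 \<le> card T"
    and "A \<in> T" "a \<le> \<mu> A"
  shows "a < \<mu> (\<Union>T)"
proof -
  have "finite T" using \<open>2 \<le> card T\<close> by (simp add: card_ge_0_finite)
  have "0 < card (T - {A})" using \<open>A \<in> T\<close> \<open>2 \<le> card T\<close> by (simp add: card_Diff_singleton)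
  then obtain A' where A': "A' \<in> T" "A' \<noteq> A" by (auto simp: card_gt_0_iff)
  have "A' \<subseteq> V" "A' \<noteq> {}" using A' \<open>\<Union>T \<subseteq> V\<close> \<open>{} \<notin> T\<close> by auto
  then have "0 < \<mu> A'" using nonneg zero by (metis order_less_le)
  have "\<mu> A + \<mu> A' = (\<Sum>X\<in>{A, A'}. \<mu> X)" using A' by simp
  also have "\<dots> \<le> (\<Sum>X\<in>T. \<mu> X)"
    using A' \<open>A \<in> T\<close> \<open>finite T\<close> nonneg \<open>\<Union>T \<subseteq> V\<close> by (intro sum_mono2) auto
  also have "\<dots> = \<mu> (\<Union>T)"
    using measure_Union_disjoint[OF additive] assms(4-6) by simp
  finally show ?thesis using \<open>0 < \<mu> A'\<close> \<open>a \<le> \<mu> A\<close> by simp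
qed

lemma sum_coarsening:
  assumes "finite P" "finite Q" "disjoint P" "disjoint Q" "{} \<notin> P" "\<Union>P \<subseteq> \<Union>Q"
    and unions: "\<forall>B\<in>Q. \<exists>T\<subseteq>P. B = \<Union>T"
  shows "(\<Sum>A\<in>P. g A) = (\<Sum>B\<in>Q. \<Sum>A\<in>{A\<in>P. A \<subseteq> B}. g A)"
proof -
  have P: "(\<Union>B\<in>Q. {A\<in>P. A \<subseteq> B}) = P"
  proof (intro equalityI subsetI)
    fix A assume "A \<in> P"
    then obtain x where "x \<in> A" using \<open>{} \<notin> P\<close> by (metis equals0I)
    then obtain B where "B \<in> Q" "x \<in> B" using \<open>A \<in> P\<close> \<open>\<Union>P \<subseteq> \<Union>Q\<close> by blast
    moreover obtain T where "T \<subseteq> P" "B = \<Union>T" using unions \<open>B \<in> Q\<close> by blast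
    ultimately obtain A' where "A' \<in> P" "A' \<subseteq> B" "x \<in> A'" by blast
    then have "A' = A" using \<open>x \<in> A\<close> disjointD[OF \<open>disjoint P\<close> _ \<open>A \<in> P\<close>] by blast
    then show "A \<in> (\<Union>B\<in>Q. {A\<in>P. A \<subseteq> B})" using \<open>A' \<in> P\<close> \<open>A' \<subseteq> B\<close> \<open>B \<in> Q\<close> by blast
  qed blast
  have "{A\<in>P. A \<subseteq> B} \<inter> {A\<in>P. A \<subseteq> B'} = {}" if "B \<in> Q" "B' \<in> Q" "B \<noteq> B'" for B B'
  proof (intro equals0I)
    fix A assume "A \<in> {A\<in>P. A \<subseteq> B} \<inter> {A\<in>P. A \<subseteq> B'}"
    then have "A \<subseteq> B \<inter> B'" "A \<in> P" by auto
    then show False using disjointD[OF \<open>disjoint Q\<close> that] \<open>{} \<notin> P\<close> by auto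
  qed
  then have "(\<Sum>B\<in>Q. \<Sum>A\<in>{A\<in>P. A \<subseteq> B}. g A) = (\<Sum>A\<in>(\<Union>B\<in>Q. {A\<in>P. A \<subseteq> B}). g A)"
    using \<open>finite P\<close> \<open>finite Q\<close> by (intro sum.UNION_disjoint[symmetric]) auto
  then show ?thesis unfolding P by simp
qed

lemma valid_partition_blockD:
  "valid_partition E V S P \<Longrightarrow> A \<in> P \<Longrightarrow> A \<noteq> {} \<and> A \<subseteq> V"
  by (simp add: valid_partition_def conn_set_def)

lemma valid_partition_Union: "valid_partition E V S P \<Longrightarrow> \<Union>P = V - S"
  unfolding valid_partition_def by blast

lemma valid_partition_finite: "finite V \<Longrightarrow> valid_partition E V S P \<Longrightarrow> finite P"
  by (rule finite_subset[of P "Pow V"]) (auto dest: valid_partition_blockD)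

lemma Union_notin_diff:
  assumes "disjoint P" "{} \<notin> P" "T \<subseteq> P" "T \<noteq> {}"
  shows "\<Union>T \<notin> P - T"
proof
  assume U: "\<Union>T \<in> P - T"
  obtain A where "A \<in> T" using \<open>T \<noteq> {}\<close> by blast
  then have "A \<in> P" "A \<noteq> \<Union>T" using U \<open>T \<subseteq> P\<close> by auto
  then have "A \<inter> \<Union>T = {}" using U disjointD[OF \<open>disjoint P\<close>] by simp
  then have "A = {}" using \<open>A \<in> T\<close> by blast
  then show False using \<open>A \<in> P\<close> \<open>{} \<notin> P\<close> by simp
qed

lemma coarser_merge:
  assumes P: "valid_partition E V S P" and "T \<subseteq> P" "conn_set E V (\<Union>T)"
  shows "coarser E V S (insert (\<Union>T) (P - T)) P"
proof -
  have "disjoint P" using P by (simp add: valid_partition_def)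
  have "disjnt (\<Union>T) B" if "B \<in> P - T" for B
  proof -
    have "A \<inter> B = {}" if "A \<in> T" for A
      using disjointD[OF \<open>disjoint P\<close>] \<open>B \<in> P - T\<close> \<open>A \<in> T\<close> \<open>T \<subseteq> P\<close> by blast
    then show ?thesis by (auto simp: disjnt_def)
  qed
  then have "disjoint (insert (\<Union>T) (P - T))"
    using pairwise_subset[OF \<open>disjoint P\<close>, of "P - T"] by (auto simp: pairwise_insert disjnt_sym)
  moreover have "\<exists>T'\<subseteq>P. B = \<Union>T'" if "B \<in> insert (\<Union>T) (P - T)" for B
  proof (cases "B = \<Union>T")
    case False
    then have "B \<in> P" using that by blast
    then show ?thesis by (intro exI[of _ "{B}"]) auto
  qed (use \<open>T \<subseteq> P\<close> in blast)
  moreover have "\<Union>(insert (\<Union>T) (P - T)) = \<Union>P" using \<open>T \<subseteq> P\<close> by blast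
  ultimately show ?thesis using assms by (auto simp: coarser_def valid_partition_def)
qed

lemma sum_merge:
  fixes g :: "'a set \<Rightarrow> 'b::ab_group_add"
  assumes "finite P" "disjoint P" "{} \<notin> P" "T \<subseteq> P" "T \<noteq> {}"
  shows "(\<Sum>B\<in>insert (\<Union>T) (P - T). g B) = (\<Sum>B\<in>P. g B) - (\<Sum>B\<in>T. g B) + g (\<Union>T)"
  using Union_notin_diff[OF assms(2-5)] assms by (simp add: sum_diff finite_subset)

locale coarsening =
  fixes E :: "('a \<times> 'a) set" and V :: "'a set" and \<mu> :: "'a set \<Rightarrow> real"
    and Sstar :: "'a set" and P0 :: "'a set set"
  assumes finite_V: "finite V"
    and additive: "\<forall>S. S \<subseteq> V \<longrightarrow> \<mu> S = (\<Sum>s\<in>S. \<mu> {s})"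
    and nonneg: "\<forall>S. S \<subseteq> V \<longrightarrow> \<mu> S \<ge> 0"
    and zero_imp_empty: "\<forall>S. S \<subseteq> V \<longrightarrow> \<mu> S = 0 \<longrightarrow> S = {}"
    and valid_P0: "valid_partition E V Sstar P0"
begin

abbreviation "score \<equiv> rank_score \<mu> (\<mu> Sstar)"
abbreviation "weight B \<equiv> rank_weight (\<mu> Sstar) (\<mu> B)"
abbreviation "perc \<equiv> percentile \<mu> Sstar"

lemma finite_P0: "finite P0"
  using valid_partition_finite[OF finite_V valid_P0] .

lemma disjoint_P0: "disjoint P0" and empty_notin_P0: "{} \<notin> P0" and Union_P0: "\<Union>P0 \<subseteq> V"
  using valid_P0 valid_partition_blockD[OF valid_P0] by (auto simp: valid_partition_def)

lemma weight_Union_eq_one: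
  assumes "T \<subseteq> P0" "2 \<le> card T" "0 < score T"
  shows "weight (\<Union>T) = 1"
proof -
  obtain A where "A \<in> T" "weight A \<noteq> 0"
    using \<open>0 < score T\<close> unfolding rank_score_def by (metis less_irrefl sum.neutral)
  then have "\<mu> Sstar \<le> \<mu> A" by (auto simp: rank_weight_def split: if_splits)
  then have "\<mu> Sstar < \<mu> (\<Union>T)"
    using measure_Union_greater[OF additive nonneg zero_imp_empty finite_V] assms(1,2) \<open>A \<in> T\<close>
      disjoint_P0 empty_notin_P0 Union_P0 by (blast intro: pairwise_subset)
  then show ?thesis by (simp add: rank_weight_def)
qed

lemma merge_threshold_iff:
  assumes "T \<subseteq> P0" "2 \<le> card T"
  shows "perc P0 * (real (card T) - 1) < score T - weight (\<Union>T) \<longleftrightarrow>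
           perc P0 < (score T - 1) / (real (card T) - 1)" (is ?gain)
    and "score T - weight (\<Union>T) < perc P0 * (real (card T) - 1) \<longleftrightarrow>
           (score T - 1) / (real (card T) - 1) < perc P0" (is ?loss)
proof -
  have "0 < perc P0" using percentile_pos[OF finite_P0] .
  moreover have "0 < real (card T) - 1" using assms(2) by simp
  ultimately show ?gain ?loss
    using merge_gain_iff[OF _ _ rank_score_nonneg rank_weight_bounds weight_Union_eq_one[OF assms]]
    by blast+
qed

lemma percentile_merge_iff:
  assumes "T \<subseteq> P0" "conn_set E V (\<Union>T)"
  defines "Q \<equiv> insert (\<Union>T) (P0 - T)"
  shows "perc Q < perc P0 \<longleftrightarrow> perc P0 * (real (card T) - 1) < score T - weight (\<Union>T)" (is ?below)
    and "perc P0 < perc Q \<longleftrightarrow> score T - weight (\<Union>T) < perc P0 * (real (card T) - 1)" (is ?above)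
proof -
  have "T \<noteq> {}" using assms(2) by (auto simp: conn_set_def)
  note merge = sum_merge[OF finite_P0 disjoint_P0 empty_notin_P0 assms(1) this]
  have "score P0 - score Q = score T - weight (\<Union>T)"
    unfolding rank_score_def Q_def merge[of weight] by simp
  moreover have "real (card P0) - real (card Q) = real (card T) - 1"
    using merge[of "\<lambda>_. 1 :: real"] unfolding Q_def by simp
  moreover have "finite Q" using finite_P0 by (simp add: Q_def)
  ultimately show ?below ?above
    using percentile_less_percentile_iff[OF finite_P0] by simp_all
qed

abbreviation merged_blocks :: "'a set \<Rightarrow> 'a set set" where
  "merged_blocks B \<equiv> {A\<in>P0. A \<subseteq> B}"

lemma percentile_coarser_iff:
  assumes "coarser E V Sstar Q P0"
  shows "perc Q < perc P0 \<longleftrightarrow>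
           perc P0 * (\<Sum>B\<in>Q. real (card (merged_blocks B)) - 1)
             < (\<Sum>B\<in>Q. score (merged_blocks B) - weight B)" (is ?below)
    and "perc P0 < perc Q \<longleftrightarrow>
           (\<Sum>B\<in>Q. score (merged_blocks B) - weight B)
             < perc P0 * (\<Sum>B\<in>Q. real (card (merged_blocks B)) - 1)" (is ?above)
proof -
  have Q: "valid_partition E V Sstar Q" "\<forall>B\<in>Q. \<exists>T\<subseteq>P0. B = \<Union>T"
    using assms by (simp_all add: coarser_def)
  then have "finite Q" using valid_partition_finite[OF finite_V] by blast
  have "\<Union>P0 = \<Union>Q" using valid_partition_Union[OF Q(1)] valid_partition_Union[OF valid_P0] by simp
  then have sums: "(\<Sum>A\<in>P0. g A) = (\<Sum>B\<in>Q. \<Sum>A\<in>merged_blocks B. g A)" for g :: "'a set \<Rightarrow> real"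
    using Q(1) by (intro sum_coarsening[OF finite_P0 \<open>finite Q\<close> disjoint_P0 _ empty_notin_P0 _ Q(2)])
      (simp_all add: valid_partition_def)
  have "score P0 - score Q = (\<Sum>B\<in>Q. score (merged_blocks B) - weight B)"
    using sums[of weight] by (simp add: rank_score_def sum_subtractf)
  moreover have "real (card P0) - real (card Q) = (\<Sum>B\<in>Q. real (card (merged_blocks B)) - 1)"
    using sums[of "\<lambda>_. 1"] by (simp add: sum_subtractf)
  ultimately show ?below ?above
    using percentile_less_percentile_iff[OF finite_P0 \<open>finite Q\<close>] by simp_all
qed

lemma merged_blocks_of_coarser:
  assumes "coarser E V Sstar Q P0" "B \<in> Q"
  shows "\<Union>(merged_blocks B) = B" "conn_set E V B"
    and "merged_blocks B = {B} \<or> 2 \<le> card (merged_blocks B)"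
proof -
  obtain T where "T \<subseteq> P0" "B = \<Union>T" using assms by (auto simp: coarser_def)
  then show "\<Union>(merged_blocks B) = B" by blast
  show "conn_set E V B" using assms by (simp add: coarser_def valid_partition_def)
  then have "merged_blocks B \<noteq> {}" using \<open>\<Union>(merged_blocks B) = B\<close> by (auto simp: conn_set_def)
  moreover have "finite (merged_blocks B)" using finite_P0 by simp
  ultimately have "card (merged_blocks B) = 1 \<or> 2 \<le> card (merged_blocks B)"
    using card_gt_0_iff[of "merged_blocks B"] by linarith
  moreover have "merged_blocks B = {B}" if one: "card (merged_blocks B) = 1"
  proof -
    obtain A where A: "merged_blocks B = {A}" using card_1_singletonE[OF one] by blast
    then have "A = B" using \<open>\<Union>(merged_blocks B) = B\<close> by simp
    then show ?thesis using A by simp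
  qed
  ultimately show "merged_blocks B = {B} \<or> 2 \<le> card (merged_blocks B)" by blast
qed

lemma exists_coarser_below_iff:
  "(\<exists>Q. coarser E V Sstar Q P0 \<and> perc Q < perc P0) \<longleftrightarrow>
     (\<exists>T\<subseteq>P0. 2 \<le> card T \<and> conn_set E V (\<Union>T) \<and> perc P0 < (score T - 1) / (real (card T) - 1))"
proof
  assume "\<exists>Q. coarser E V Sstar Q P0 \<and> perc Q < perc P0"
  then obtain Q where Q: "coarser E V Sstar Q P0" "perc Q < perc P0" by blast
  then have "(\<Sum>B\<in>Q. perc P0 * (real (card (merged_blocks B)) - 1))
      < (\<Sum>B\<in>Q. score (merged_blocks B) - weight B)"
    using percentile_coarser_iff(1) by (simp add: sum_distrib_left)
  then obtain B where "B \<in> Q"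
    and gain: "perc P0 * (real (card (merged_blocks B)) - 1) < score (merged_blocks B) - weight B"
    using sum_less_sumD by blast
  note G = merged_blocks_of_coarser[OF Q(1) \<open>B \<in> Q\<close>]
  have "merged_blocks B \<noteq> {B}" using gain by auto
  then have "2 \<le> card (merged_blocks B)" using G(3) by blast
  then have "perc P0 < (score (merged_blocks B) - 1) / (real (card (merged_blocks B)) - 1)"
    using gain G(1) merge_threshold_iff(1)[of "merged_blocks B"] by simp
  then show "\<exists>T\<subseteq>P0. 2 \<le> card T \<and> conn_set E V (\<Union>T) \<and> perc P0 < (score T - 1) / (real (card T) - 1)"
    using G(1,2) \<open>2 \<le> card (merged_blocks B)\<close> by (intro exI[of _ "merged_blocks B"]) simp
next
  assume "\<exists>T\<subseteq>P0. 2 \<le> card T \<and> conn_set E V (\<Union>T) \<and> perc P0 < (score T - 1) / (real (card T) - 1)"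
  then obtain T where T: "T \<subseteq> P0" "2 \<le> card T" "conn_set E V (\<Union>T)"
    "perc P0 < (score T - 1) / (real (card T) - 1)" by blast
  then have "perc (insert (\<Union>T) (P0 - T)) < perc P0"
    using merge_threshold_iff(1) percentile_merge_iff(1) by simp
  then show "\<exists>Q. coarser E V Sstar Q P0 \<and> perc Q < perc P0"
    using coarser_merge[OF valid_P0 T(1,3)] by blast
qed

lemma exists_coarser_above_iff:
  "(\<exists>Q. coarser E V Sstar Q P0 \<and> perc P0 < perc Q) \<longleftrightarrow>
     (\<exists>T\<subseteq>P0. 2 \<le> card T \<and> conn_set E V (\<Union>T) \<and> (score T - 1) / (real (card T) - 1) < perc P0)"
proof
  assume "\<exists>Q. coarser E V Sstar Q P0 \<and> perc P0 < perc Q"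
  then obtain Q where Q: "coarser E V Sstar Q P0" "perc P0 < perc Q" by blast
  then have "(\<Sum>B\<in>Q. score (merged_blocks B) - weight B)
      < (\<Sum>B\<in>Q. perc P0 * (real (card (merged_blocks B)) - 1))"
    using percentile_coarser_iff(2) by (simp add: sum_distrib_left)
  then obtain B where "B \<in> Q"
    and loss: "score (merged_blocks B) - weight B < perc P0 * (real (card (merged_blocks B)) - 1)"
    using sum_less_sumD by blast
  note G = merged_blocks_of_coarser[OF Q(1) \<open>B \<in> Q\<close>]
  have "merged_blocks B \<noteq> {B}" using loss by auto
  then have "2 \<le> card (merged_blocks B)" using G(3) by blast
  then have "(score (merged_blocks B) - 1) / (real (card (merged_blocks B)) - 1) < perc P0"
    using loss G(1) merge_threshold_iff(2)[of "merged_blocks B"] by simp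
  then show "\<exists>T\<subseteq>P0. 2 \<le> card T \<and> conn_set E V (\<Union>T) \<and> (score T - 1) / (real (card T) - 1) < perc P0"
    using G(1,2) \<open>2 \<le> card (merged_blocks B)\<close> by (intro exI[of _ "merged_blocks B"]) simp
next
  assume "\<exists>T\<subseteq>P0. 2 \<le> card T \<and> conn_set E V (\<Union>T) \<and> (score T - 1) / (real (card T) - 1) < perc P0"
  then obtain T where T: "T \<subseteq> P0" "2 \<le> card T" "conn_set E V (\<Union>T)"
    "(score T - 1) / (real (card T) - 1) < perc P0" by blast
  then have "perc P0 < perc (insert (\<Union>T) (P0 - T))"
    using merge_threshold_iff(2) percentile_merge_iff(2) by simp
  then show "\<exists>Q. coarser E V Sstar Q P0 \<and> perc P0 < perc Q"
    using coarser_merge[OF valid_P0 T(1,3)] by blast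
qed

end

theorem lemma2p3:
  fixes V :: "'a set" and E :: "('a \<times> 'a) set" and \<mu> :: "'a set \<Rightarrow> real"
    and Sstar :: "'a set" and P0 :: "'a set set"
  assumes "finite V"
    and "E \<subseteq> V \<times> V" and "refl_on V E" and "sym E"
    and "\<forall>S. S \<subseteq> V \<longrightarrow> \<mu> S = (\<Sum>s\<in>S. \<mu> {s})"
    and "\<forall>S. S \<subseteq> V \<longrightarrow> \<mu> S \<ge> 0"
    and "\<forall>S. S \<subseteq> V \<longrightarrow> \<mu> S = 0 \<longrightarrow> S = {}"
    and "Sstar = {} \<or> conn_set E V Sstar"
    and "valid_partition E V Sstar P0"
  shows "((\<exists>Q. coarser E V Sstar Q P0 \<and> percentile \<mu> Sstar Q < percentile \<mu> Sstar P0) \<longleftrightarrow>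
           (\<exists>T\<subseteq>P0. card T \<ge> 2 \<and> conn_set E V (\<Union>T) \<and>
              (real (card {B\<in>T. \<mu> B > \<mu> Sstar}) + 0.5 * real (card {B\<in>T. \<mu> B = \<mu> Sstar}) - 1)
                / (real (card T) - 1) > percentile \<mu> Sstar P0))
       \<and> ((\<exists>Q. coarser E V Sstar Q P0 \<and> percentile \<mu> Sstar Q > percentile \<mu> Sstar P0) \<longleftrightarrow>
           (\<exists>T\<subseteq>P0. card T \<ge> 2 \<and> conn_set E V (\<Union>T) \<and>
              (real (card {B\<in>T. \<mu> B > \<mu> Sstar}) + 0.5 * real (card {B\<in>T. \<mu> B = \<mu> Sstar}) - 1)
                / (real (card T) - 1) < percentile \<mu> Sstar P0))"
proof -
  interpret coarsening E V \<mu> Sstar P0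
    using assms(1,5-7,9) by unfold_locales
  have "rank_score \<mu> (\<mu> Sstar) T =
      real (card {B\<in>T. \<mu> B > \<mu> Sstar}) + 0.5 * real (card {B\<in>T. \<mu> B = \<mu> Sstar})" if "T \<subseteq> P0" for T
    using rank_score_eq_card finite_subset[OF that finite_P0] by blast
  then show ?thesis
    using exists_coarser_below_iff exists_coarser_above_iff by (simp cong: conj_cong)
qed

end
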